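(* Let $G$ be an abelian group (written multiplicatively) and let $A$ and $B$ be nonempty finite subsets of $G$. Assume that for every nontrivial finite subgroup $H$ of $G$ and all elements $a,b\in G$ we have $|aH\cap A|+|bH\cap B|\leq |H|+1$. Then for all nonempty subsets $S\subset A$ and $T\subset B$, we have $|ST|\geq |S|+|T|-1$.
   Context: For subsets $S,T$ of $G$, $ST=\{st: s\in S, t\in T\}$. *)

theory Defs
  imports "HOL-Algebra.Coset"
begin

end

theory Submission
  imports Defs "HOL-Algebra.Left_Coset"
begin

text \<open>
  Let \<open>H\<close> be the stabilizer of \<open>ST\<close> and \<open>a \<in> S\<close>, \<open>b \<in> T\<close>. Since \<open>aH - S \<subseteq> SH - S\<close>, Kneser's
  theorem \<open>|SH| + |TH| \<le> |ST| + |H|\<close> gives \<open>|S| + |T| + |H| \<le> |ST| + |S \<inter> aH| + |T \<inter> bH|\<close>.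
  If \<open>H\<close> is trivial the two intersections are singletons; otherwise the hypothesis bounds their
  total size by \<open>|H| + 1\<close>.

  Kneser's theorem is proved for a counterexample \<open>(A, B)\<close> that is minimal for the lexicographic
  order on \<open>(|AB|, -(|A| + |B|), |B|)\<close>. Minimality makes \<open>A\<close> and \<open>B\<close> the residuals
  \<open>{x. xB \<subseteq> AB}\<close> and \<open>{y. Ay \<subseteq> AB}\<close>, hence \<open>H\<close>-periodic, so \<open>|AB| + |H| < |A| + |B|\<close>.
  Take the Dyson transform \<open>(A \<union> eB, B \<inter> e\<inverse>A)\<close> whose second component is proper and of maximal
  size; by minimality its product set \<open>C\<^sub>e\<close> is a proper subset of \<open>AB\<close>. Let \<open>K\<close> be the stabilizer
  of \<open>C\<^sub>e\<close>. Minimality applied to the residual of \<open>C\<^sub>e\<close>, together with counting inside a coset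
  \<open>aK\<close> with \<open>ab \<notin> C\<^sub>e\<close> for some \<open>b \<in> B\<close>, yields more than \<open>|H|\<close> elements \<open>b' \<in> B - e\<inverse>A\<close>
  with \<open>eb' \<in> aK\<close>. On \<open>aK\<close> the set \<open>A\<close> is a translate of \<open>E = {k \<in> K. ekB \<subseteq> A}\<close>, so these \<open>b'\<close>
  differ by elements of the stabilizer of \<open>E\<close>; but that stabilizer fixes \<open>A\<close> and hence lies in \<open>H\<close>.
\<close>

section \<open>Products, translates and stabilizers\<close>

lemma mem_set_mult_iff:
  fixes G (structure)
  shows "x \<in> A <#> B \<longleftrightarrow> (\<exists>a\<in>A. \<exists>b\<in>B. x = a \<otimes> b)"
  unfolding set_mult_def by auto

lemma mem_l_coset_iff:
  fixes G (structure)
  shows "y \<in> x <# X \<longleftrightarrow> (\<exists>h\<in>X. y = x \<otimes> h)"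
  unfolding l_coset_def by auto

lemma finite_set_mult:
  fixes G (structure)
  assumes "finite A" "finite B"
  shows "finite (A <#> B)"
proof -
  have "A <#> B = (\<lambda>(a, b). a \<otimes> b) ` (A \<times> B)"
    unfolding set_mult_def by auto
  then show ?thesis
    using assms by simp
qed

lemma l_coset_subset_set_mult:
  fixes G (structure)
  shows "a \<in> A \<Longrightarrow> a <# B \<subseteq> A <#> B"
  unfolding l_coset_def set_mult_def by blast

text \<open>For finite \<open>X\<close> the inclusion forces \<open>gX = X\<close>, so this is the usual stabilizer.\<close>

definition stab :: "('a, 'b) monoid_scheme \<Rightarrow> 'a set \<Rightarrow> 'a set" where
  "stab G X = {g \<in> carrier G. g <#\<^bsub>G\<^esub> X \<subseteq> X}"

definition residual :: "('a, 'b) monoid_scheme \<Rightarrow> 'a set \<Rightarrow> 'a set \<Rightarrow> 'a set" where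
  "residual G C B = {x \<in> carrier G. x <#\<^bsub>G\<^esub> B \<subseteq> C}"

lemma mem_stab_iff:
  fixes G (structure)
  shows "g \<in> stab G X \<longleftrightarrow> g \<in> carrier G \<and> (\<forall>x\<in>X. g \<otimes> x \<in> X)"
  unfolding stab_def l_coset_def by auto

lemma mem_residual_iff:
  fixes G (structure)
  shows "x \<in> residual G C B \<longleftrightarrow> x \<in> carrier G \<and> (\<forall>b\<in>B. x \<otimes> b \<in> C)"
  unfolding residual_def l_coset_def by auto

context group
begin

lemma card_l_coset:
  assumes "x \<in> carrier G" "X \<subseteq> carrier G"
  shows "card (x <# X) = card X"
proof -
  have "inj_on (\<lambda>h. x \<otimes> h) X"
    using assms by (intro inj_onI) (metis Units_eq Units_l_cancel subsetD)
  then show ?thesis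
    unfolding l_coset_def by (simp add: UNION_singleton_eq_range card_image)
qed

lemma finite_l_coset: "finite X \<Longrightarrow> finite (x <# X)"
  unfolding l_coset_def by simp

lemma one_in_stab: "X \<subseteq> carrier G \<Longrightarrow> \<one> \<in> stab G X"
  by (auto simp: mem_stab_iff subset_iff)

lemma stab_subgroup:
  assumes "finite X" "X \<subseteq> carrier G"
  shows "subgroup (stab G X) G"
proof (rule subgroupI)
  show "stab G X \<subseteq> carrier G"
    by (auto simp: stab_def)
  show "stab G X \<noteq> {}"
    using one_in_stab[OF assms(2)] by blast
next
  fix g h assume g: "g \<in> stab G X" and h: "h \<in> stab G X"
  then show "g \<otimes> h \<in> stab G X"
    using assms(2) by (auto simp: mem_stab_iff m_assoc subset_iff)
  have "g <# X = X"
    using g assms by (intro card_subset_eq) (auto simp: stab_def card_l_coset finite_l_coset)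
  have "inv g \<otimes> x \<in> X" if "x \<in> X" for x
  proof -
    obtain y where "y \<in> X" "x = g \<otimes> y"
      using \<open>x \<in> X\<close> \<open>g <# X = X\<close> by (metis mem_l_coset_iff)
    then show ?thesis
      using g assms(2) by (auto simp: stab_def m_assoc[symmetric] subset_iff)
  qed
  then show "inv g \<in> stab G X"
    using g by (simp add: mem_stab_iff)
qed

lemma finite_stab:
  assumes "finite X" "x \<in> X" "X \<subseteq> carrier G"
  shows "finite (stab G X)"
proof -
  have "stab G X \<subseteq> (\<lambda>y. y \<otimes> inv x) ` X"
  proof
    fix g assume "g \<in> stab G X"
    then have "g \<otimes> x \<in> X" "g = (g \<otimes> x) \<otimes> inv x"
      using assms by (auto simp: mem_stab_iff m_assoc)
    then show "g \<in> (\<lambda>y. y \<otimes> inv x) ` X" by blast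
  qed
  then show ?thesis
    using assms(1) finite_subset by blast
qed

lemma stab_set_mult_finite_subgroup:
  assumes "finite S" "S \<subseteq> carrier G" "a \<in> S" "finite T" "T \<subseteq> carrier G" "b \<in> T"
  shows "subgroup (stab G (S <#> T)) G" "finite (stab G (S <#> T))"
proof -
  have "a \<otimes> b \<in> S <#> T"
    using assms(3,6) unfolding mem_set_mult_iff by blast
  moreover have "finite (S <#> T)"
    using assms(1,4) by (rule finite_set_mult)
  moreover have "S <#> T \<subseteq> carrier G"
    using assms(2,5) by (rule set_mult_closed)
  ultimately show "subgroup (stab G (S <#> T)) G" "finite (stab G (S <#> T))"
    by (auto intro: stab_subgroup finite_stab)
qed

lemma stab_subset_subgroup:
  assumes "subgroup K G" "X \<subseteq> K" "x \<in> X"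
  shows "stab G X \<subseteq> K"
proof
  fix g assume g: "g \<in> stab G X"
  have "x \<in> K"
    using assms(2,3) by blast
  then have x: "x \<in> carrier G" "inv x \<in> K"
    using subgroup.mem_carrier[OF assms(1)] subgroup.m_inv_closed[OF assms(1)] by auto
  have "g = (g \<otimes> x) \<otimes> inv x"
    using g x by (simp add: mem_stab_iff m_assoc)
  also have "\<dots> \<in> K"
  proof (rule subgroup.m_closed[OF assms(1) _ x(2)])
    show "g \<otimes> x \<in> K"
      using g assms(2,3) by (auto simp: mem_stab_iff)
  qed
  finally show "g \<in> K" .
qed

lemma stab_subset_stab_set_mult:
  assumes "A \<subseteq> carrier G" "B \<subseteq> carrier G"
  shows "stab G A \<subseteq> stab G (A <#> B)"
  using assms by (fastforce simp: mem_stab_iff mem_set_mult_iff m_assoc[symmetric] subset_iff)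

lemma subset_residual: "A \<subseteq> carrier G \<Longrightarrow> A \<subseteq> residual G (A <#> B) B"
  unfolding subset_iff mem_residual_iff mem_set_mult_iff by blast

lemma residual_set_mult_subset: "residual G C B <#> B \<subseteq> C"
  by (auto simp: mem_residual_iff mem_set_mult_iff)

lemma residual_set_mult_eq: "A \<subseteq> carrier G \<Longrightarrow> residual G (A <#> B) B <#> B = A <#> B"
  using residual_set_mult_subset mono_set_mult[OF subset_residual] by blast

lemma finite_residual:
  assumes "finite C" "b \<in> B" "B \<subseteq> carrier G"
  shows "finite (residual G C B)"
proof -
  have "residual G C B \<subseteq> (\<lambda>c. c \<otimes> inv b) ` C"
  proof
    fix x assume "x \<in> residual G C B"
    then have "x \<otimes> b \<in> C" "x = (x \<otimes> b) \<otimes> inv b"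
      using assms(2,3) by (auto simp: mem_residual_iff m_assoc)
    then show "x \<in> (\<lambda>c. c \<otimes> inv b) ` C" by blast
  qed
  then show ?thesis
    using assms(1) finite_subset by blast
qed

lemma stab_subset_stab_residual:
  assumes "B \<subseteq> carrier G"
  shows "stab G C \<subseteq> stab G (residual G C B)"
  using assms by (auto simp: mem_stab_iff mem_residual_iff m_assoc subset_iff)

end

context comm_group
begin

lemma set_mult_comm: "A \<subseteq> carrier G \<Longrightarrow> B \<subseteq> carrier G \<Longrightarrow> A <#> B = B <#> A"
  unfolding set_mult_def by (blast intro: m_comm)

lemma card_le_card_set_mult:
  assumes "finite A" "finite B" "a \<in> A" "A \<subseteq> carrier G" "B \<subseteq> carrier G"
  shows "card B \<le> card (A <#> B)"
proof -
  have "card B = card (a <# B)"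
    using assms by (auto simp: card_l_coset)
  also have "\<dots> \<le> card (A <#> B)"
    using assms by (intro card_mono finite_set_mult l_coset_subset_set_mult)
  finally show ?thesis .
qed

lemma card_add_le_card_set_mult:
  assumes "finite A" "A \<noteq> {}" "A \<subseteq> carrier G" "finite B" "B \<noteq> {}" "B \<subseteq> carrier G"
  shows "card A + card B \<le> 2 * card (A <#> B)"
proof -
  obtain a b where "a \<in> A" "b \<in> B"
    using assms(2,5) by blast
  have "card B \<le> card (A <#> B)"
    using assms(1,4) \<open>a \<in> A\<close> assms(3,6) by (rule card_le_card_set_mult)
  moreover have "card A \<le> card (B <#> A)"
    using assms(4,1) \<open>b \<in> B\<close> assms(6,3) by (rule card_le_card_set_mult)
  moreover have "B <#> A = A <#> B"
    using assms(3,6) by (rule set_mult_comm[symmetric])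
  ultimately show ?thesis
    by simp
qed

lemma set_mult_eq_of_subset_stab:
  assumes "A \<subseteq> carrier G" "K \<subseteq> stab G A" "\<one> \<in> K"
  shows "A <#> K = A"
proof
  show "A <#> K \<subseteq> A"
    using assms by (fastforce simp: mem_set_mult_iff mem_stab_iff m_comm subset_iff)
  show "A \<subseteq> A <#> K"
    using assms(1,3) by (force simp: mem_set_mult_iff)
qed

lemma inv_mult_mem_stab_of_l_coset_eq:
  assumes "x <# E = y <# E" "x \<in> carrier G" "y \<in> carrier G" "E \<subseteq> carrier G"
  shows "inv y \<otimes> x \<in> stab G E"
proof -
  have "(inv y \<otimes> x) \<otimes> k \<in> E" if "k \<in> E" for k
  proof -
    obtain k' where "k' \<in> E" "x \<otimes> k = y \<otimes> k'"
      using \<open>k \<in> E\<close> assms(1) by (metis mem_l_coset_iff)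
    moreover have "(inv y \<otimes> x) \<otimes> k = inv y \<otimes> (x \<otimes> k)"
      using that assms(2-4) by (auto simp: m_assoc)
    ultimately show ?thesis
      using assms(3,4) by (auto simp: m_assoc[symmetric])
  qed
  then show ?thesis
    using assms(2,3) by (simp add: mem_stab_iff)
qed

end

section \<open>Dyson transforms\<close>

definition dyson_left :: "('a, 'b) monoid_scheme \<Rightarrow> 'a \<Rightarrow> 'a set \<Rightarrow> 'a set \<Rightarrow> 'a set" where
  "dyson_left G e A B = A \<union> (e <#\<^bsub>G\<^esub> B)"

definition dyson_right :: "('a, 'b) monoid_scheme \<Rightarrow> 'a \<Rightarrow> 'a set \<Rightarrow> 'a set \<Rightarrow> 'a set" where
  "dyson_right G e A B = {b \<in> B. e \<otimes>\<^bsub>G\<^esub> b \<in> A}"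

context comm_group
begin

lemma dyson_set_mult_subset:
  assumes "e \<in> carrier G" "A \<subseteq> carrier G" "B \<subseteq> carrier G"
  shows "dyson_left G e A B <#> dyson_right G e A B \<subseteq> A <#> B"
proof
  fix x assume "x \<in> dyson_left G e A B <#> dyson_right G e A B"
  then obtain y b where y: "y \<in> A \<union> (e <# B)" and b: "b \<in> B" "e \<otimes> b \<in> A" and x: "x = y \<otimes> b"
    by (auto simp: mem_set_mult_iff dyson_left_def dyson_right_def)
  show "x \<in> A <#> B"
  proof (cases "y \<in> A")
    case True
    then show ?thesis
      using b x by (auto simp: mem_set_mult_iff)
  next
    case False
    then obtain b' where "b' \<in> B" "y = e \<otimes> b'"
      using y by (auto simp: mem_l_coset_iff)
    moreover from this have "x = (e \<otimes> b) \<otimes> b'"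
      using assms b x by (simp add: m_ac subset_iff)
    ultimately show ?thesis
      using b by (auto simp: mem_set_mult_iff)
  qed
qed

lemma card_dyson:
  assumes "finite A" "finite B" "e \<in> carrier G" "B \<subseteq> carrier G"
  shows "card (dyson_left G e A B) + card (dyson_right G e A B) = card A + card B"
proof -
  let ?Be = "dyson_right G e A B"
  have "dyson_left G e A B = A \<union> (e <# (B - ?Be))"
    by (auto simp: dyson_left_def dyson_right_def mem_l_coset_iff)
  moreover have "A \<inter> (e <# (B - ?Be)) = {}"
    by (auto simp: dyson_right_def mem_l_coset_iff)
  moreover have "card (e <# (B - ?Be)) + card ?Be = card B"
  proof -
    have "?Be \<subseteq> B" "finite ?Be"
      using assms(2) by (auto simp: dyson_right_def)
    moreover have "card (e <# (B - ?Be)) = card (B - ?Be)"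
      using assms(3,4) by (intro card_l_coset) auto
    moreover have "card ?Be \<le> card B"
      using assms(2) \<open>?Be \<subseteq> B\<close> by (rule card_mono)
    ultimately show ?thesis
      by (simp add: card_Diff_subset)
  qed
  ultimately show ?thesis
    using assms(1,2) by (simp add: card_Un_disjoint finite_l_coset)
qed

lemma stab_dyson_left:
  assumes "e \<in> carrier G" "B \<subseteq> carrier G"
  shows "stab G A \<inter> stab G B \<subseteq> stab G (dyson_left G e A B)"
  using assms by (fastforce simp: mem_stab_iff dyson_left_def mem_l_coset_iff m_lcomm subset_iff)

lemma stab_dyson_right:
  assumes "e \<in> carrier G" "B \<subseteq> carrier G"
  shows "stab G A \<inter> stab G B \<subseteq> stab G (dyson_right G e A B)"
  using assms by (fastforce simp: mem_stab_iff dyson_right_def m_lcomm subset_iff)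

end

section \<open>Kneser's theorem\<close>

definition kneser_ineq :: "('a, 'b) monoid_scheme \<Rightarrow> 'a set \<Rightarrow> 'a set \<Rightarrow> bool" where
  "kneser_ineq G A B \<longleftrightarrow>
     card (A <#>\<^bsub>G\<^esub> stab G (A <#>\<^bsub>G\<^esub> B)) + card (B <#>\<^bsub>G\<^esub> stab G (A <#>\<^bsub>G\<^esub> B))
       \<le> card (A <#>\<^bsub>G\<^esub> B) + card (stab G (A <#>\<^bsub>G\<^esub> B))"

lemma kneser_ineq_mono:
  fixes G (structure)
  assumes "A \<subseteq> A'" "B \<subseteq> B'" "A' <#> B' = A <#> B"
    and "finite A'" "finite B'" "finite (stab G (A <#> B))"
    and "kneser_ineq G A' B'"
  shows "kneser_ineq G A B"
proof -
  let ?H = "stab G (A <#> B)"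
  have "card (A <#> ?H) \<le> card (A' <#> ?H)"
    by (rule card_mono[OF finite_set_mult[OF assms(4,6)] mono_set_mult[OF assms(1) order_refl]])
  moreover have "card (B <#> ?H) \<le> card (B' <#> ?H)"
    by (rule card_mono[OF finite_set_mult[OF assms(5,6)] mono_set_mult[OF assms(2) order_refl]])
  ultimately show ?thesis
    using assms(3,7) by (simp add: kneser_ineq_def)
qed

locale kneser_counterexample = comm_group +
  fixes A B :: "'a set"
  assumes finite_A: "finite A" and A_nonempty: "A \<noteq> {}" and A_carrier: "A \<subseteq> carrier G"
    and finite_B: "finite B" and B_nonempty: "B \<noteq> {}" and B_carrier: "B \<subseteq> carrier G"
    and not_kneser: "\<not> kneser_ineq G A B"
    and kneser_smaller:
      "\<And>A' B'. \<lbrakk>finite A'; A' \<noteq> {}; A' \<subseteq> carrier G; finite B'; B' \<noteq> {}; B' \<subseteq> carrier G;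
          card (A' <#> B') < card (A <#> B) \<or>
          card (A' <#> B') = card (A <#> B) \<and> card A + card B < card A' + card B' \<or>
          card (A' <#> B') = card (A <#> B) \<and> card A' + card B' = card A + card B \<and> card B' < card B\<rbrakk>
        \<Longrightarrow> kneser_ineq G A' B'"
begin

abbreviation "C \<equiv> A <#> B"
abbreviation "H \<equiv> stab G C"

lemma C_carrier: "C \<subseteq> carrier G"
  using A_carrier B_carrier by (rule set_mult_closed)

lemma finite_C: "finite C"
  using finite_A finite_B by (rule finite_set_mult)

lemma finite_H: "finite H"
proof -
  obtain a b where "a \<in> A" "b \<in> B"
    using A_nonempty B_nonempty by blast
  then show ?thesis
    using finite_A A_carrier finite_B B_carrier by (auto intro: stab_set_mult_finite_subgroup)
qed

lemma card_A_le_C: "card A \<le> card C"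
proof -
  obtain b where "b \<in> B"
    using B_nonempty by blast
  then have "card A \<le> card (B <#> A)"
    using finite_A finite_B A_carrier B_carrier by (intro card_le_card_set_mult)
  then show ?thesis
    using A_carrier B_carrier by (simp add: set_mult_comm)
qed

lemma same_product_extension_eq:
  assumes "A \<subseteq> A'" "B \<subseteq> B'" "A' <#> B' = C"
    and "finite A'" "A' \<subseteq> carrier G" "finite B'" "B' \<subseteq> carrier G"
  shows "A' = A \<and> B' = B"
proof (rule ccontr)
  assume "\<not> (A' = A \<and> B' = B)"
  then consider "A \<subset> A'" | "B \<subset> B'"
    using assms(1,2) by blast
  then have "card A < card A' \<or> card B < card B'"
    by cases (use assms(4,6) psubset_card_mono in blast)+
  moreover have "card A \<le> card A'" "card B \<le> card B'"
    using assms(1,2,4,6) by (auto intro: card_mono)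
  ultimately have "card A + card B < card A' + card B'"
    by linarith
  then have "kneser_ineq G A' B'"
    using assms A_nonempty B_nonempty by (intro kneser_smaller) auto
  with assms(1-4,6) finite_H have "kneser_ineq G A B"
    by (rule kneser_ineq_mono)
  with not_kneser show False ..
qed

lemma A_eq_residual: "A = residual G C B"
proof -
  let ?R = "residual G C B"
  obtain b where "b \<in> B"
    using B_nonempty by blast
  have "A \<subseteq> ?R"
    using A_carrier by (rule subset_residual)
  moreover have "finite ?R"
    using finite_C \<open>b \<in> B\<close> B_carrier by (rule finite_residual)
  moreover have "?R <#> B = C"
    using A_carrier by (rule residual_set_mult_eq)
  ultimately show ?thesis
    using same_product_extension_eq[of ?R B] finite_B B_carrier by (auto simp: residual_def)
qed

lemma B_eq_residual: "B = residual G C A"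
proof -
  let ?R = "residual G C A"
  obtain a where "a \<in> A"
    using A_nonempty by blast
  have C_eq: "C = B <#> A"
    using A_carrier B_carrier by (rule set_mult_comm)
  have "B \<subseteq> ?R"
    unfolding C_eq using B_carrier by (rule subset_residual)
  moreover have "finite ?R"
    using finite_C \<open>a \<in> A\<close> A_carrier by (rule finite_residual)
  moreover have "A <#> ?R = C"
    using residual_set_mult_eq[OF B_carrier, of A] A_carrier
    by (simp add: C_eq set_mult_comm residual_def)
  ultimately show ?thesis
    using same_product_extension_eq[of A ?R] finite_A A_carrier by (auto simp: residual_def)
qed

lemma H_subset_stab_A: "H \<subseteq> stab G A"
  using stab_subset_stab_residual[OF B_carrier, of C] unfolding A_eq_residual[symmetric] .

lemma H_subset_stab_B: "H \<subseteq> stab G B"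
  using stab_subset_stab_residual[OF A_carrier, of C] unfolding B_eq_residual[symmetric] .

lemma set_mult_H_eq: "X \<subseteq> carrier G \<Longrightarrow> H \<subseteq> stab G X \<Longrightarrow> X <#> H = X"
  using one_in_stab[OF C_carrier] by (intro set_mult_eq_of_subset_stab)

lemma card_C_H_less: "card C + card H < card A + card B"
proof -
  have "A <#> H = A" "B <#> H = B"
    using A_carrier B_carrier H_subset_stab_A H_subset_stab_B by (simp_all add: set_mult_H_eq)
  then show ?thesis
    using not_kneser by (simp add: kneser_ineq_def)
qed

lemma exists_proper_dyson: "\<exists>e\<in>carrier G. dyson_right G e A B \<noteq> {} \<and> dyson_right G e A B \<noteq> B"
proof (rule ccontr)
  assume no_proper: "\<not> ?thesis"
  obtain b0 where b0: "b0 \<in> B" "b0 \<in> carrier G"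
    using B_nonempty B_carrier by blast
  have "inv b0 <# B \<subseteq> H"
  proof
    fix g assume "g \<in> inv b0 <# B"
    then obtain b where b: "b \<in> B" "b \<in> carrier G" and g: "g = inv b0 \<otimes> b"
      using B_carrier by (auto simp: mem_l_coset_iff)
    have "g \<otimes> c \<in> C" if "c \<in> C" for c
    proof -
      obtain a b' where a: "a \<in> A" "a \<in> carrier G" and b': "b' \<in> B" "b' \<in> carrier G"
        and c: "c = a \<otimes> b'"
        using \<open>c \<in> C\<close> A_carrier B_carrier by (auto simp: mem_set_mult_iff)
      let ?e = "a \<otimes> inv b0"
      have "b0 \<in> dyson_right G ?e A B"
        using a b0 by (simp add: dyson_right_def m_assoc)
      then have "dyson_right G ?e A B = B"
        using no_proper a b0 by blast
      then have "?e \<otimes> b \<in> A"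
        using b by (auto simp: dyson_right_def)
      moreover have "g \<otimes> c = (?e \<otimes> b) \<otimes> b'"
        using a b b' b0 by (simp add: g c m_ac)
      ultimately show ?thesis
        using b' by (auto simp: mem_set_mult_iff)
    qed
    then show "g \<in> H"
      using b b0 by (simp add: g mem_stab_iff)
  qed
  then have "card (inv b0 <# B) \<le> card H"
    using finite_H by (rule card_mono[rotated])
  then have "card B \<le> card H"
    using b0 B_carrier by (simp add: card_l_coset)
  then show False
    using card_C_H_less card_A_le_C by linarith
qed

end

locale kneser_transform = kneser_counterexample +
  fixes e
  assumes e_carrier: "e \<in> carrier G"
    and Be_nonempty: "dyson_right G e A B \<noteq> {}"
    and Be_ne_B: "dyson_right G e A B \<noteq> B"
    and Be_maximal: "\<And>e'. \<lbrakk>e' \<in> carrier G; dyson_right G e' A B \<noteq> {}; dyson_right G e' A B \<noteq> B\<rbrakk>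
      \<Longrightarrow> card (dyson_right G e' A B) \<le> card (dyson_right G e A B)"
begin

abbreviation "Ae \<equiv> dyson_left G e A B"
abbreviation "Be \<equiv> dyson_right G e A B"
abbreviation "Ce \<equiv> Ae <#> Be"
abbreviation "K \<equiv> stab G Ce"
abbreviation "E \<equiv> {k \<in> K. dyson_right G (e \<otimes> k) A B = B}"
abbreviation "bad_fibre a \<equiv> {b \<in> B - Be. e \<otimes> b \<in> a <# K}"

lemma Ae_carrier: "Ae \<subseteq> carrier G"
  using A_carrier l_coset_subset_G[OF B_carrier e_carrier] by (simp add: dyson_left_def)

lemma Be_subset_B: "Be \<subseteq> B"
  by (auto simp: dyson_right_def)

lemma Be_carrier: "Be \<subseteq> carrier G"
  using Be_subset_B B_carrier by blast

lemma A_subset_Ae: "A \<subseteq> Ae"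
  by (simp add: dyson_left_def)

lemma finite_Ae: "finite Ae"
  using finite_A finite_B by (simp add: dyson_left_def finite_l_coset)

lemma finite_Be: "finite Be"
  using finite_B Be_subset_B by (rule finite_subset[rotated])

lemma Ce_subset_C: "Ce \<subseteq> C"
  using e_carrier A_carrier B_carrier by (rule dyson_set_mult_subset)

lemma Ce_carrier: "Ce \<subseteq> carrier G"
  using Ce_subset_C C_carrier by blast

lemma finite_Ce: "finite Ce"
  using finite_C Ce_subset_C by (rule finite_subset[rotated])

lemma Ce_psubset_C: "Ce \<subset> C"
proof (rule ccontr)
  assume "\<not> Ce \<subset> C"
  then have Ce_eq: "Ce = C"
    using Ce_subset_C by blast
  have card_eq: "card Ae + card Be = card A + card B"
    using finite_A finite_B e_carrier B_carrier by (rule card_dyson)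
  have "card Be < card B"
    using finite_B Be_subset_B Be_ne_B by (simp add: psubset_card_mono psubsetI)
  then have "kneser_ineq G Ae Be"
    using finite_Ae finite_Be Ae_carrier Be_carrier Be_nonempty A_nonempty A_subset_Ae card_eq Ce_eq
    by (intro kneser_smaller) auto
  moreover have "H \<subseteq> stab G Ae" "H \<subseteq> stab G Be"
    using H_subset_stab_A H_subset_stab_B stab_dyson_left[OF e_carrier B_carrier, of A]
      stab_dyson_right[OF e_carrier B_carrier, of A] by blast+
  then have "Ae <#> H = Ae" "Be <#> H = Be"
    using Ae_carrier Be_carrier by (simp_all add: set_mult_H_eq)
  ultimately have "card Ae + card Be \<le> card C + card H"
    using Ce_eq by (simp add: kneser_ineq_def)
  then show False
    using card_eq card_C_H_less by linarith
qed

lemma K_subgroup: "subgroup K G"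
  using finite_Ce Ce_carrier by (rule stab_subgroup)

lemma finite_K: "finite K"
proof -
  obtain a b where "a \<in> Ae" "b \<in> Be"
    using A_nonempty A_subset_Ae Be_nonempty by blast
  then have "a \<otimes> b \<in> Ce"
    by (auto simp: mem_set_mult_iff)
  then show ?thesis
    by (rule finite_stab[OF finite_Ce _ Ce_carrier])
qed

lemma K_stabilizes:
  assumes "k \<in> K" "x \<in> Ae" "b \<in> Be"
  shows "k \<otimes> (x \<otimes> b) \<in> Ce"
proof -
  have "x \<otimes> b \<in> Ce"
    using assms(2,3) unfolding mem_set_mult_iff by blast
  then show ?thesis
    using assms(1) by (simp add: mem_stab_iff)
qed

lemma K_mult_Be_in_B:
  assumes "k \<in> K" "b \<in> Be"
  shows "k \<otimes> b \<in> B"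
proof -
  have kc: "k \<in> carrier G" and bc: "b \<in> carrier G"
    using assms Be_carrier by (auto simp: mem_stab_iff)
  have "(k \<otimes> b) \<otimes> a \<in> C" if "a \<in> A" for a
  proof -
    have "(k \<otimes> b) \<otimes> a = k \<otimes> (a \<otimes> b)"
      using that A_carrier kc bc by (auto simp: m_ac)
    then show ?thesis
      using K_stabilizes[OF assms(1) _ assms(2)] that A_subset_Ae Ce_subset_C by auto
  qed
  then have "k \<otimes> b \<in> residual G C A"
    using kc bc by (simp add: mem_residual_iff)
  then show ?thesis
    unfolding B_eq_residual[symmetric] .
qed

lemma e_mult_K_mult_Be_in_A:
  assumes "k \<in> K" "b \<in> Be"
  shows "e \<otimes> (k \<otimes> b) \<in> A"
proof -
  have kc: "k \<in> carrier G" and bc: "b \<in> carrier G"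
    using assms Be_carrier by (auto simp: mem_stab_iff)
  have "(e \<otimes> (k \<otimes> b)) \<otimes> b' \<in> C" if "b' \<in> B" for b'
  proof -
    have "(e \<otimes> (k \<otimes> b)) \<otimes> b' = k \<otimes> ((e \<otimes> b') \<otimes> b)"
      using that B_carrier e_carrier kc bc by (auto simp: m_ac)
    moreover have "e \<otimes> b' \<in> Ae"
      using that by (auto simp: dyson_left_def mem_l_coset_iff)
    ultimately show ?thesis
      using K_stabilizes[OF assms(1) _ assms(2)] Ce_subset_C by auto
  qed
  then have "e \<otimes> (k \<otimes> b) \<in> residual G C B"
    using e_carrier kc bc by (simp add: mem_residual_iff)
  then show ?thesis
    unfolding A_eq_residual[symmetric] .
qed

lemma K_subset_stab_Be: "K \<subseteq> stab G Be"
  using K_mult_Be_in_B e_mult_K_mult_Be_in_A by (auto simp: mem_stab_iff dyson_right_def)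

lemma card_residual_Ce: "card (residual G Ce Be) + card Be \<le> card Ce + card K"
proof -
  let ?As = "residual G Ce Be"
  obtain b where "b \<in> Be"
    using Be_nonempty by blast
  have As_Be: "?As <#> Be = Ce"
    using Ae_carrier by (rule residual_set_mult_eq)
  have "A \<subseteq> ?As"
    using A_subset_Ae subset_residual[OF Ae_carrier] by blast
  moreover have "finite ?As"
    using finite_Ce \<open>b \<in> Be\<close> Be_carrier by (rule finite_residual)
  moreover have As_carrier: "?As \<subseteq> carrier G"
    by (auto simp: residual_def)
  moreover have "card Ce < card C"
    using finite_C Ce_psubset_C by (rule psubset_card_mono)
  ultimately have "kneser_ineq G ?As Be"
    using A_nonempty finite_Be Be_nonempty Be_carrier As_Be by (intro kneser_smaller) auto
  moreover have "?As <#> K = ?As"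
    using As_carrier stab_subset_stab_residual[OF Be_carrier] one_in_stab[OF Ce_carrier]
    by (rule set_mult_eq_of_subset_stab)
  moreover have "Be <#> K = Be"
    using Be_carrier K_subset_stab_Be one_in_stab[OF Ce_carrier] by (rule set_mult_eq_of_subset_stab)
  ultimately show ?thesis
    using As_Be by (simp add: kneser_ineq_def)
qed

lemma dyson_right_shift:
  assumes "k \<in> K" "k \<notin> E"
  shows "dyson_right G (e \<otimes> k) A B = Be"
proof -
  have kc: "k \<in> carrier G"
    using assms(1) by (simp add: mem_stab_iff)
  have sub: "Be \<subseteq> dyson_right G (e \<otimes> k) A B"
  proof
    fix b assume b: "b \<in> Be"
    then have "(e \<otimes> k) \<otimes> b = e \<otimes> (k \<otimes> b)"
      using Be_carrier e_carrier kc by (auto simp: m_assoc)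
    then show "b \<in> dyson_right G (e \<otimes> k) A B"
      using b e_mult_K_mult_Be_in_A[OF assms(1) b] by (auto simp: dyson_right_def)
  qed
  have "card (dyson_right G (e \<otimes> k) A B) \<le> card Be"
    using assms Be_nonempty sub e_carrier kc by (intro Be_maximal) auto
  then show ?thesis
    using sub finite_B by (intro card_seteq[symmetric]) (auto simp: dyson_right_def)
qed

lemma A_inter_l_coset_K:
  assumes "a \<in> carrier G" "b \<in> bad_fibre a"
  shows "A \<inter> (a <# K) = (e \<otimes> b) <# E"
proof -
  have b: "b \<in> B" "b \<notin> Be" "e \<otimes> b \<in> a <# K"
    using assms(2) by auto
  have bc: "b \<in> carrier G"
    using b(1) B_carrier by blast
  have "A \<inter> ((e \<otimes> b) <# K) = (e \<otimes> b) <# E"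
  proof
    show "A \<inter> ((e \<otimes> b) <# K) \<subseteq> (e \<otimes> b) <# E"
    proof
      fix x assume "x \<in> A \<inter> ((e \<otimes> b) <# K)"
      then obtain k where k: "k \<in> K" "k \<in> carrier G" and x: "x \<in> A" "x = (e \<otimes> b) \<otimes> k"
        by (auto simp: mem_l_coset_iff mem_stab_iff)
      have "(e \<otimes> k) \<otimes> b = x"
        using x k bc e_carrier by (simp add: m_ac)
      then have "b \<in> dyson_right G (e \<otimes> k) A B"
        using x b(1) by (simp add: dyson_right_def)
      then have "k \<in> E"
        using dyson_right_shift[OF k(1)] b(2) by blast
      then show "x \<in> (e \<otimes> b) <# E"
        using x by (auto simp: mem_l_coset_iff)
    qed
    show "(e \<otimes> b) <# E \<subseteq> A \<inter> ((e \<otimes> b) <# K)"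
    proof
      fix x assume "x \<in> (e \<otimes> b) <# E"
      then obtain k where k: "k \<in> E" "k \<in> carrier G" and x: "x = (e \<otimes> b) \<otimes> k"
        by (auto simp: mem_l_coset_iff mem_stab_iff)
      have "b \<in> dyson_right G (e \<otimes> k) A B"
        using k(1) b(1) by simp
      then have "(e \<otimes> k) \<otimes> b \<in> A"
        by (simp add: dyson_right_def)
      moreover have "(e \<otimes> k) \<otimes> b = x"
        using x k bc e_carrier by (simp add: m_ac)
      ultimately show "x \<in> A \<inter> ((e \<otimes> b) <# K)"
        using k x by (auto simp: mem_l_coset_iff)
    qed
  qed
  moreover have "a <# K = (e \<otimes> b) <# K"
    using b(3) assms(1) K_subgroup by (rule l_repr_independence)
  ultimately show ?thesis
    by simp
qed

lemma card_A_inter_l_coset_K: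
  assumes "a \<in> A" "b \<in> B" "a \<otimes> b \<notin> Ce"
  shows "card (A \<inter> (a <# K)) + card Ce \<le> card C"
proof -
  let ?X = "A \<inter> (a <# K)"
  have ac: "a \<in> carrier G" and bc: "b \<in> carrier G"
    using assms A_carrier B_carrier by auto
  have "b <# ?X \<subseteq> C - Ce"
  proof
    fix y assume "y \<in> b <# ?X"
    then obtain k where k: "k \<in> K" "k \<in> carrier G" "a \<otimes> k \<in> A" and y: "y = b \<otimes> (a \<otimes> k)"
      by (auto simp: mem_l_coset_iff mem_stab_iff)
    have y_eq: "y = (a \<otimes> k) \<otimes> b" "y = k \<otimes> (a \<otimes> b)"
      using y k ac bc by (simp_all add: m_ac)
    then have "y \<in> C"
      using k(3) assms(2) unfolding mem_set_mult_iff by blast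
    moreover have "y \<notin> Ce"
    proof
      assume "y \<in> Ce"
      moreover have "inv k \<in> K"
        using K_subgroup k(1) by (rule subgroup.m_inv_closed)
      ultimately have "inv k \<otimes> y \<in> Ce"
        by (simp add: mem_stab_iff)
      moreover have "inv k \<otimes> y = a \<otimes> b"
        using y_eq(2) k ac bc by (simp add: m_assoc[symmetric])
      ultimately show False
        using assms(3) by simp
    qed
    ultimately show "y \<in> C - Ce"
      by blast
  qed
  then have "card (b <# ?X) \<le> card (C - Ce)"
    using finite_C by (intro card_mono) auto
  moreover have "card (b <# ?X) = card ?X"
    using bc A_carrier by (intro card_l_coset) auto
  moreover have "card (C - Ce) = card C - card Ce" "card Ce \<le> card C"
    using finite_C Ce_subset_C by (auto simp: card_Diff_subset finite_Ce card_mono)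
  ultimately show ?thesis
    by linarith
qed

lemma l_coset_K_subset_residual:
  assumes "a \<in> A"
  shows "a <# K \<subseteq> residual G Ce Be"
proof
  fix x assume "x \<in> a <# K"
  moreover have "a \<in> carrier G"
    using assms A_carrier by blast
  ultimately obtain k where k: "k \<in> K" "k \<in> carrier G" and x: "x = k \<otimes> a"
    by (auto simp: mem_l_coset_iff mem_stab_iff m_comm)
  have "k \<in> stab G (residual G Ce Be)"
    using k(1) stab_subset_stab_residual[OF Be_carrier] by blast
  moreover have "a \<in> residual G Ce Be"
    using assms A_subset_Ae subset_residual[OF Ae_carrier] by blast
  ultimately show "x \<in> residual G Ce Be"
    using x by (auto simp: mem_stab_iff)
qed

lemma l_coset_K_gap_inter_dyson_gap:
  "((a <# K) - A) \<inter> (e <# (B - Be)) = e <# bad_fibre a"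
proof (intro equalityI subsetI)
  fix x assume x: "x \<in> ((a <# K) - A) \<inter> (e <# (B - Be))"
  then obtain b where b: "b \<in> B - Be" "x = e \<otimes> b"
    by (auto simp: mem_l_coset_iff)
  with x have "b \<in> bad_fibre a"
    by simp
  with b(2) show "x \<in> e <# bad_fibre a"
    unfolding mem_l_coset_iff by blast
next
  fix x assume "x \<in> e <# bad_fibre a"
  then obtain b where b: "b \<in> B" "b \<notin> Be" "e \<otimes> b \<in> a <# K" "x = e \<otimes> b"
    by (auto simp: mem_l_coset_iff)
  then have "x \<notin> A"
    by (simp add: dyson_right_def)
  moreover have "x \<in> a <# K"
    using b by simp
  moreover have "x \<in> e <# (B - Be)"
    using b unfolding mem_l_coset_iff by blast
  ultimately show "x \<in> ((a <# K) - A) \<inter> (e <# (B - Be))"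
    by blast
qed

lemma card_gaps_le_residual:
  assumes "a \<in> A"
  shows "card (((a <# K) - A) \<union> (e <# (B - Be))) + card A \<le> card (residual G Ce Be)"
proof -
  let ?As = "residual G Ce Be"
  let ?P = "(a <# K) - A" and ?Q = "e <# (B - Be)"
  have finite_As: "finite ?As"
    using finite_Ce Be_nonempty Be_carrier finite_residual by blast
  have Q_Ae: "?Q \<subseteq> Ae"
    by (auto simp: dyson_left_def mem_l_coset_iff)
  have Q_A: "?Q \<inter> A = {}"
    by (auto simp: dyson_right_def mem_l_coset_iff)
  have PQA_As: "(?P \<union> ?Q) \<union> A \<subseteq> ?As"
    using l_coset_K_subset_residual[OF assms] Q_Ae A_subset_Ae subset_residual[OF Ae_carrier]
    by blast
  have "card (?P \<union> ?Q) + card A = card ((?P \<union> ?Q) \<union> A)"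
    using finite_K finite_B finite_A Q_A by (intro card_Un_disjoint[symmetric]) (auto simp: finite_l_coset)
  also have "\<dots> \<le> card ?As"
    using finite_As PQA_As by (rule card_mono)
  finally show ?thesis .
qed

lemma card_l_coset_K_split:
  assumes "a \<in> carrier G"
  shows "card ((a <# K) - A) + card (A \<inter> (a <# K)) = card K"
proof -
  have "a <# K = ((a <# K) - A) \<union> (A \<inter> (a <# K))"
    by blast
  moreover have "((a <# K) - A) \<inter> (A \<inter> (a <# K)) = {}"
    by blast
  ultimately have "card (a <# K) = card ((a <# K) - A) + card (A \<inter> (a <# K))"
    using finite_K finite_A card_Un_disjoint[of "(a <# K) - A" "A \<inter> (a <# K)"]
    by (simp add: finite_l_coset)
  moreover have "card (a <# K) = card K"
    using assms K_subgroup subgroup.subset by (blast intro: card_l_coset)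
  ultimately show ?thesis
    by simp
qed

lemma card_le_bad_fibre:
  assumes "a \<in> A" "b \<in> B" "a \<otimes> b \<notin> Ce"
  shows "card A + card B \<le> card C + card (bad_fibre a)"
proof -
  let ?P = "(a <# K) - A" and ?Q = "e <# (B - Be)"
  \<comment> \<open>both gaps lie in the residual of \<open>C\<^sub>e\<close> outside \<open>A\<close>, so they must overlap substantially\<close>
  have "card ?P + card ?Q = card (?P \<union> ?Q) + card (e <# bad_fibre a)"
    using card_Un_Int[of ?P ?Q] finite_K finite_B
    by (simp add: l_coset_K_gap_inter_dyson_gap finite_l_coset)
  moreover have "card (e <# bad_fibre a) = card (bad_fibre a)"
    using e_carrier B_carrier by (intro card_l_coset) auto
  moreover have "card ?Q + card Be = card B"
  proof -
    have "card ?Q = card (B - Be)"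
      using e_carrier B_carrier by (intro card_l_coset) auto
    then show ?thesis
      using finite_B Be_subset_B by (simp add: card_Diff_subset finite_subset card_mono)
  qed
  moreover have "card ?P + card (A \<inter> (a <# K)) = card K"
    using assms(1) A_carrier by (intro card_l_coset_K_split) auto
  moreover note card_gaps_le_residual[OF assms(1)] card_A_inter_l_coset_K[OF assms] card_residual_Ce
  ultimately show ?thesis
    by linarith
qed

lemma card_H_less_bad_fibre:
  assumes "a \<in> A" "b \<in> B" "a \<otimes> b \<notin> Ce"
  shows "card H < card (bad_fibre a)"
  using card_le_bad_fibre[OF assms] card_C_H_less by linarith

lemma bad_fibre_nonempty:
  assumes "a \<in> A" "b \<in> B" "a \<otimes> b \<notin> Ce"
  shows "bad_fibre a \<noteq> {}"
  using card_H_less_bad_fibre[OF assms] by (metis card.empty not_less0)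

lemma stab_E_mult_mem_A:
  assumes "s \<in> stab G E" "E \<noteq> {}" "a \<in> A"
  shows "s \<otimes> a \<in> A"
proof -
  have sK: "s \<in> K"
    using assms(1,2) stab_subset_subgroup[OF K_subgroup, of E] by blast
  have sc: "s \<in> carrier G" and ac: "a \<in> carrier G"
    using assms(1,3) A_carrier by (auto simp: mem_stab_iff)
  show ?thesis
  proof (cases "\<forall>b\<in>B. a \<otimes> b \<in> Ce")
    case True
    have "(s \<otimes> a) \<otimes> b \<in> C" if "b \<in> B" for b
    proof -
      have "(s \<otimes> a) \<otimes> b = s \<otimes> (a \<otimes> b)"
        using that sc ac B_carrier by (auto simp: m_assoc)
      then show ?thesis
        using True that sK Ce_subset_C by (auto simp: mem_stab_iff)
    qed
    then have "s \<otimes> a \<in> residual G C B"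
      using sc ac by (simp add: mem_residual_iff)
    then show ?thesis
      unfolding A_eq_residual[symmetric] .
  next
    case False
    then obtain b where "b \<in> B" "a \<otimes> b \<notin> Ce"
      by blast
    with assms(3) have "bad_fibre a \<noteq> {}"
      by (rule bad_fibre_nonempty)
    then obtain b' where b': "b' \<in> bad_fibre a"
      by blast
    have coset: "A \<inter> (a <# K) = (e \<otimes> b') <# E"
      using ac b' by (rule A_inter_l_coset_K)
    then have "a \<in> (e \<otimes> b') <# E"
      using assms(3) lcos_self[OF ac K_subgroup] by blast
    then obtain k where k: "k \<in> E" "a = (e \<otimes> b') \<otimes> k"
      unfolding mem_l_coset_iff by blast
    have "s \<otimes> k \<in> E"
      using assms(1) k(1) by (simp add: mem_stab_iff)
    moreover have "s \<otimes> a = (e \<otimes> b') \<otimes> (s \<otimes> k)"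
    proof -
      have "k \<in> carrier G" "b' \<in> carrier G"
        using k(1) b' B_carrier by (auto simp: mem_stab_iff)
      then show ?thesis
        using k(2) sc e_carrier by (simp add: m_ac)
    qed
    ultimately have "s \<otimes> a \<in> (e \<otimes> b') <# E"
      unfolding mem_l_coset_iff by blast
    then show ?thesis
      using coset by blast
  qed
qed

lemma stab_E_subset_H:
  assumes "E \<noteq> {}"
  shows "stab G E \<subseteq> H"
proof -
  have "stab G E \<subseteq> stab G A"
  proof
    fix s assume s: "s \<in> stab G E"
    then show "s \<in> stab G A"
      using stab_E_mult_mem_A[OF s assms] by (simp add: mem_stab_iff)
  qed
  then show ?thesis
    using stab_subset_stab_set_mult[OF A_carrier B_carrier] by (rule subset_trans)
qed

lemma E_nonempty:
  assumes "a \<in> A" "b \<in> bad_fibre a"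
  shows "E \<noteq> {}"
proof -
  have ac: "a \<in> carrier G"
    using assms(1) A_carrier by blast
  have "a \<in> A \<inter> (a <# K)"
    using assms(1) lcos_self[OF ac K_subgroup] by blast
  then have "a \<in> (e \<otimes> b) <# E"
    unfolding A_inter_l_coset_K[OF ac assms(2)] .
  then show ?thesis
    by (auto simp: mem_l_coset_iff)
qed

lemma l_coset_inv_bad_fibre_subset_stab_E:
  assumes "a \<in> A" "b1 \<in> bad_fibre a"
  shows "inv b1 <# bad_fibre a \<subseteq> stab G E"
proof
  fix g assume "g \<in> inv b1 <# bad_fibre a"
  then obtain b where b: "b \<in> bad_fibre a" and g: "g = inv b1 \<otimes> b"
    by (auto simp: mem_l_coset_iff)
  have ac: "a \<in> carrier G"
    using assms(1) A_carrier by blast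
  have bc: "b \<in> carrier G" and b1c: "b1 \<in> carrier G"
    using b assms(2) B_carrier by auto
  have "(e \<otimes> b) <# E = (e \<otimes> b1) <# E"
    using A_inter_l_coset_K[OF ac b] A_inter_l_coset_K[OF ac assms(2)] by simp
  moreover have "E \<subseteq> carrier G"
    by (auto simp: mem_stab_iff)
  ultimately have "inv (e \<otimes> b1) \<otimes> (e \<otimes> b) \<in> stab G E"
    using e_carrier bc b1c by (intro inv_mult_mem_stab_of_l_coset_eq) simp_all
  moreover have "inv (e \<otimes> b1) \<otimes> (e \<otimes> b) = g"
  proof -
    have "inv e \<otimes> (e \<otimes> b) = b"
      using e_carrier bc by (simp add: m_assoc[symmetric])
    then show ?thesis
      using e_carrier bc b1c by (simp add: g inv_mult_group m_assoc)
  qed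
  ultimately show "g \<in> stab G E"
    by simp
qed

lemma maximal_transform_impossible: False
proof -
  obtain c where "c \<in> C" "c \<notin> Ce"
    using Ce_psubset_C by blast
  then obtain a b where a: "a \<in> A" and b: "b \<in> B" and bad: "a \<otimes> b \<notin> Ce"
    by (auto simp: mem_set_mult_iff)
  from bad_fibre_nonempty[OF a b bad] obtain b1 where b1: "b1 \<in> bad_fibre a"
    by blast
  have "card (bad_fibre a) = card (inv b1 <# bad_fibre a)"
    using b1 B_carrier by (intro card_l_coset[symmetric]) auto
  also have "\<dots> \<le> card H"
    using finite_H subset_trans[OF l_coset_inv_bad_fibre_subset_stab_E[OF a b1]
        stab_E_subset_H[OF E_nonempty[OF a b1]]]
    by (rule card_mono)
  finally show False
    using card_H_less_bad_fibre[OF a b bad] by linarith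
qed

end

lemma (in kneser_counterexample) impossible: False
proof -
  let ?proper = "\<lambda>e. e \<in> carrier G \<and> dyson_right G e A B \<noteq> {} \<and> dyson_right G e A B \<noteq> B"
  obtain e0 where "?proper e0"
    using exists_proper_dyson by blast
  moreover have "\<forall>e. ?proper e \<longrightarrow> card (dyson_right G e A B) < card B + 1"
  proof (intro allI impI)
    fix e
    have "card (dyson_right G e A B) \<le> card B"
      using finite_B by (rule card_mono) (auto simp: dyson_right_def)
    then show "card (dyson_right G e A B) < card B + 1"
      by simp
  qed
  ultimately have "\<exists>e. ?proper e \<and>
      (\<forall>e'. ?proper e' \<longrightarrow> card (dyson_right G e' A B) \<le> card (dyson_right G e A B))"
    by (rule Lattices_Big.ex_has_greatest_nat)
  then obtain e where e: "?proper e"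
    and maximal: "\<forall>e'. ?proper e' \<longrightarrow> card (dyson_right G e' A B) \<le> card (dyson_right G e A B)"
    by blast
  interpret kneser_transform G A B e
    using kneser_counterexample_axioms e maximal
    by (intro kneser_transform.intro kneser_transform_axioms.intro) auto
  show False
    by (rule maximal_transform_impossible)
qed

lemma (in comm_group) kneser:
  assumes "finite A" "A \<noteq> {}" "A \<subseteq> carrier G" "finite B" "B \<noteq> {}" "B \<subseteq> carrier G"
  shows "kneser_ineq G A B"
proof -
  define admissible where "admissible X \<longleftrightarrow> finite X \<and> X \<noteq> {} \<and> X \<subseteq> carrier G" for X
  \<comment> \<open>the middle component stands for \<open>-(|A| + |B|)\<close>; it is a natural number because
     \<open>|A| + |B| \<le> 2|AB|\<close>\<close>
  let ?fs = "[\<lambda>(A, B). card (A <#> B), \<lambda>(A, B). 2 * card (A <#> B) - (card A + card B),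
    \<lambda>(A, B). card B] :: ('a set \<times> 'a set \<Rightarrow> nat) list"
  have "kneser_ineq G (fst p) (snd p)" if "admissible (fst p)" "admissible (snd p)" for p
    using that
  proof (induction p rule: wf_induct_rule[OF wf_measures[of ?fs]])
    case (1 p)
    obtain A B where p: "p = (A, B)"
      by (cases p)
    have "kneser_ineq G A B"
    proof (rule ccontr)
      assume "\<not> kneser_ineq G A B"
      interpret kneser_counterexample G A B
      proof (unfold_locales)
        show "finite A" "A \<noteq> {}" "A \<subseteq> carrier G" "finite B" "B \<noteq> {}" "B \<subseteq> carrier G"
          using "1.prems" by (simp_all add: p admissible_def)
        show "\<not> kneser_ineq G A B"
          by fact
      next
        fix A' B'
        assume adm: "finite A'" "A' \<noteq> {}" "A' \<subseteq> carrier G" "finite B'" "B' \<noteq> {}" "B' \<subseteq> carrier G"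
          and smaller: "card (A' <#> B') < card (A <#> B) \<or>
            card (A' <#> B') = card (A <#> B) \<and> card A + card B < card A' + card B' \<or>
            card (A' <#> B') = card (A <#> B) \<and> card A' + card B' = card A + card B \<and> card B' < card B"
        have "card A' + card B' \<le> 2 * card (A' <#> B')"
          using adm by (rule card_add_le_card_set_mult)
        then have "((A', B'), p) \<in> measures ?fs"
          unfolding p using smaller by (simp only: in_measures prod.case) arith
        then show "kneser_ineq G A' B'"
          using "1.IH"[of "(A', B')"] adm by (simp add: admissible_def)
      qed
      show False
        by (rule impossible)
    qed
    then show ?case
      by (simp add: p)
  qed
  from this[of "(A, B)"] show ?thesis
    using assms by (simp add: admissible_def)
qed

context comm_group
begin

lemma card_add_le_inter_coset:
  assumes "finite X" "X \<subseteq> carrier G" "a \<in> X" "subgroup H G" "finite H"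
  shows "card H + card X \<le> card (X \<inter> (a <# H)) + card (X <#> H)"
proof -
  have finite_XH: "finite (X <#> H)"
    using assms(1,5) by (rule finite_set_mult)
  have X_XH: "X \<subseteq> X <#> H"
  proof
    fix x assume "x \<in> X"
    moreover have "x = x \<otimes> \<one>"
      using \<open>x \<in> X\<close> assms(2) by auto
    ultimately show "x \<in> X <#> H"
      using subgroup.one_closed[OF assms(4)] unfolding mem_set_mult_iff by blast
  qed
  have "a <# H \<subseteq> (X \<inter> (a <# H)) \<union> ((X <#> H) - X)"
    using l_coset_subset_set_mult[where G = G, OF assms(3)] by blast
  then have "card (a <# H) \<le> card ((X \<inter> (a <# H)) \<union> ((X <#> H) - X))"
    using finite_XH assms(1) by (intro card_mono) auto
  also have "\<dots> \<le> card (X \<inter> (a <# H)) + card ((X <#> H) - X)"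
    by (rule card_Un_le)
  finally have "card (a <# H) \<le> card (X \<inter> (a <# H)) + card ((X <#> H) - X)" .
  moreover have "card (a <# H) = card H"
    using assms(2-4) subgroup.subset by (blast intro: card_l_coset)
  moreover have "card ((X <#> H) - X) = card (X <#> H) - card X"
    using assms(1) X_XH by (simp add: card_Diff_subset)
  moreover have "card X \<le> card (X <#> H)"
    using finite_XH X_XH by (rule card_mono)
  ultimately show ?thesis
    by linarith
qed

lemma kneser_coset_bound:
  assumes "finite S" "S \<subseteq> carrier G" "a \<in> S" "finite T" "T \<subseteq> carrier G" "b \<in> T"
  defines "H \<equiv> stab G (S <#> T)"
  shows "card S + card T + card H \<le> card (S <#> T) + card (S \<inter> (a <# H)) + card (T \<inter> (b <# H))"
proof -
  have H: "subgroup H G" "finite H"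
    unfolding H_def using assms(1-6) by (rule stab_set_mult_finite_subgroup)+
  have "card H + card S \<le> card (S \<inter> (a <# H)) + card (S <#> H)"
    using assms(1-3) H by (rule card_add_le_inter_coset)
  moreover have "card H + card T \<le> card (T \<inter> (b <# H)) + card (T <#> H)"
    using assms(4-6) H by (rule card_add_le_inter_coset)
  moreover have "card (S <#> H) + card (T <#> H) \<le> card (S <#> T) + card H"
    using kneser[of S T] assms by (auto simp: kneser_ineq_def H_def)
  ultimately show ?thesis
    by linarith
qed

end

theorem proposition2p3:
  fixes G (structure) and A B :: "'a set"
  assumes "comm_group G"
    and "A \<subseteq> carrier G" and "finite A" and "A \<noteq> {}"
    and "B \<subseteq> carrier G" and "finite B" and "B \<noteq> {}"
    and "\<And>H a b. \<lbrakk> subgroup H G; finite H; H \<noteq> {\<one>}; a \<in> carrier G; b \<in> carrier G \<rbrakk>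
           \<Longrightarrow> card ((a <# H) \<inter> A) + card ((b <# H) \<inter> B) \<le> card H + 1"
  shows "\<forall>S T. S \<subseteq> A \<and> S \<noteq> {} \<and> T \<subseteq> B \<and> T \<noteq> {} \<longrightarrow>
           int (card (S <#> T)) \<ge> int (card S) + int (card T) - 1"
proof (intro allI impI)
  fix S T assume ST: "S \<subseteq> A \<and> S \<noteq> {} \<and> T \<subseteq> B \<and> T \<noteq> {}"
  interpret comm_group G by fact
  obtain a b where a: "a \<in> S" and b: "b \<in> T"
    using ST by blast
  have S: "finite S" "S \<subseteq> carrier G" and T: "finite T" "T \<subseteq> carrier G"
    using ST assms(2,3,5,6) finite_subset by blast+
  have ab: "a \<in> carrier G" "b \<in> carrier G"
    using a b S(2) T(2) by auto
  let ?H = "stab G (S <#> T)"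
  have "card (S \<inter> (a <# ?H)) + card (T \<inter> (b <# ?H)) \<le> card ?H + 1"
  proof (cases "?H = {\<one>}")
    case True
    then show ?thesis
      using a b ab by (simp add: l_coset_def)
  next
    case False
    have "card ((a <# ?H) \<inter> A) + card ((b <# ?H) \<inter> B) \<le> card ?H + 1"
      using assms(8) stab_set_mult_finite_subgroup[OF S a T b] False ab by blast
    moreover have "card (S \<inter> (a <# ?H)) \<le> card ((a <# ?H) \<inter> A)"
      "card (T \<inter> (b <# ?H)) \<le> card ((b <# ?H) \<inter> B)"
      using ST assms(3,6) by (auto intro: card_mono)
    ultimately show ?thesis
      by linarith
  qed
  then show "int (card (S <#> T)) \<ge> int (card S) + int (card T) - 1"
    using kneser_coset_bound[OF S a T b] by linarith
qed

end
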